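(* Let $\mathcal{X}\subseteq\mathbb{R}^d$ be nonempty, closed and convex, let $f:\mathbb{R}^d\to\mathbb{R}$ be differentiable, $L$-smooth and strictly convex, and assume $\mathcal{X}_\star:=\operatorname{arg\,min}_{x\in\mathcal{X}} f(x)$ is nonempty. Let $x_0\in\mathcal{X}$, $x_\star\in\mathcal{X}_\star$, and let $\{x_k\}_{k\ge0}$ be generated by the Local LMO iteration $x_{k+1}\in\operatorname{arg\,min}_{z\in\mathcal{X}\cap\mathcal{B}(x_k,t_k)}\langle\nabla f(x_k),z\rangle$ with radii $t_k=\|\nabla f(x_k)-\nabla f(x_\star)\|/L$. Then for every $K\ge1$, $$\min_{0\le k\le K-1}\|\nabla f(x_k)-\nabla f(x_\star)\|^2\le\frac1K\sum_{k=0}^{K-1}\|\nabla f(x_k)-\nabla f(x_\star)\|^2\le\frac{L^2\|x_0-x_\star\|^2}{K}.$$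
   Context: $\|\cdot\|$ is the Euclidean norm, $\mathcal{B}(x,t):=\{y:\|y-x\|\le t\}$. $f$ is $L$-smooth if $\|\nabla f(x)-\nabla f(y)\|\le L\|x-y\|$ for all $x,y$. *)

theory Defs
  imports "HOL-Analysis.Analysis"
begin

definition strictly_convex_on :: "'a::real_vector set \<Rightarrow> ('a \<Rightarrow> real) \<Rightarrow> bool" where
  "strictly_convex_on S f \<longleftrightarrow> convex S \<and>
     (\<forall>x\<in>S. \<forall>y\<in>S. x \<noteq> y \<longrightarrow> (\<forall>u::real. 0 < u \<and> u < 1 \<longrightarrow>
        f ((1 - u) *\<^sub>R x + u *\<^sub>R y) < (1 - u) * f x + u * f y))"

end

theory Submission imports Defs begin

(* Co-coercivity of the gradient of a convex function with L-Lipschitz gradient,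
   |grad f x - grad f x_s|^2 <= L <grad f x - grad f x_s, x - x_s>, says that
   u = (grad f x_k - grad f x_s) / L, a vector of length t_k, satisfies t_k^2 <= <u, x_k - x_s>.
   If x_{k+1} lies on the sphere of radius t_k and the segment towards x_s leaves the ball,
   this alone gives |x_{k+1} - x_s|^2 <= |x_k - x_s|^2 - t_k^2.  Otherwise a small step towards x_s
   is feasible, and optimality of x_{k+1} for the linear subproblem together with optimality of
   x_s for f on X gives <u, x_{k+1} - x_s> <= 0, which forces x_{k+1} = x_k - u and again the same
   decrease.  Summing over k telescopes to sum_k L^2 t_k^2 <= L^2 |x_0 - x_s|^2.
   Strict convexity is only used through convexity. *)

lemma power2_norm_add:
  fixes a b :: "'a::real_inner"
  shows "(norm (a + b))\<^sup>2 = (norm a)\<^sup>2 + 2 * (a \<bullet> b) + (norm b)\<^sup>2"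
  unfolding power2_norm_eq_inner by (simp add: inner_add_left inner_add_right inner_commute)

lemma has_real_derivative_along_line:
  fixes f :: "'a::real_inner \<Rightarrow> real"
  assumes "GDERIV f (x + s *\<^sub>R v) :> D"
  shows "((\<lambda>s. f (x + s *\<^sub>R v)) has_real_derivative (D \<bullet> v)) (at s)"
proof -
  have "((\<lambda>s. x + s *\<^sub>R v) has_derivative (\<lambda>h. h *\<^sub>R v)) (at s)"
    by (auto intro!: derivative_eq_intros)
  from diff_chain_at[OF this assms[unfolded gderiv_def]]
  show ?thesis
    unfolding has_field_derivative_def o_def
    by (rule has_derivative_eq_rhs) (simp add: fun_eq_iff inner_commute)
qed

lemma lipschitz_gradient_upper_bound:
  fixes f :: "'a::real_inner \<Rightarrow> real"
  assumes grad: "\<And>y. GDERIV f y :> g y"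
    and lipschitz: "\<And>y z. norm (g y - g z) \<le> L * norm (y - z)"
  shows "f y \<le> f x + g x \<bullet> (y - x) + L / 2 * (norm (y - x))\<^sup>2"
proof -
  define v where "v = y - x"
  define \<psi> where "\<psi> s = f (x + s *\<^sub>R v) - s * (g x \<bullet> v) - L / 2 * s\<^sup>2 * (norm v)\<^sup>2" for s
  have \<psi>_deriv: "(\<psi> has_real_derivative
      ((g (x + s *\<^sub>R v) - g x) \<bullet> v - L * s * (norm v)\<^sup>2)) (at s)" for s
    unfolding \<psi>_def
    by (rule derivative_eq_intros has_real_derivative_along_line[OF grad] | simp add: inner_diff_left)+
  have \<psi>_deriv_nonpos: "(g (x + s *\<^sub>R v) - g x) \<bullet> v - L * s * (norm v)\<^sup>2 \<le> 0" if "0 < s" for s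
  proof -
    have "(g (x + s *\<^sub>R v) - g x) \<bullet> v \<le> norm (g (x + s *\<^sub>R v) - g x) * norm v"
      by (rule norm_cauchy_schwarz)
    also have "\<dots> \<le> L * norm (s *\<^sub>R v) * norm v"
      using lipschitz[of "x + s *\<^sub>R v" x] by (simp add: mult_right_mono)
    also have "\<dots> = L * s * (norm v)\<^sup>2"
      using that by (simp add: power2_eq_square)
    finally show ?thesis by simp
  qed
  have "\<psi> 1 \<le> \<psi> 0"
  proof (rule DERIV_nonpos_imp_decreasing_open[of 0 1])
    show "continuous_on {0..1} \<psi>"
      using \<psi>_deriv by (meson DERIV_isCont continuous_at_imp_continuous_on)
    fix s :: real
    assume "0 < s" "s < 1"
    then show "\<exists>y. (\<psi> has_real_derivative y) (at s) \<and> y \<le> 0"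
      using \<psi>_deriv \<psi>_deriv_nonpos by blast
  qed simp
  then show ?thesis unfolding \<psi>_def v_def by simp
qed

lemma strictly_convex_on_imp_convex_on:
  assumes "strictly_convex_on S f"
  shows "convex_on S f"
proof
  fix t :: real and x y
  assume "0 < t" "t < 1" "x \<in> S" "y \<in> S"
  then show "f ((1 - t) *\<^sub>R x + t *\<^sub>R y) \<le> (1 - t) * f x + t * f y"
  proof (cases "x = y")
    case True
    then show ?thesis by (simp add: algebra_simps flip: scaleR_add_left)
  next
    case False
    with assms \<open>0 < t\<close> \<open>t < 1\<close> \<open>x \<in> S\<close> \<open>y \<in> S\<close>
    show ?thesis unfolding strictly_convex_on_def by (blast intro: less_imp_le)
  qed
next
  show "convex S" using assms unfolding strictly_convex_on_def by simp
qed

lemma convex_on_gradient_inequality: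
  fixes f :: "'a::real_inner \<Rightarrow> real"
  assumes grad: "GDERIV f x :> D"
    and convex: "convex_on UNIV f"
  shows "f x + D \<bullet> (y - x) \<le> f y"
proof -
  define \<phi> where "\<phi> s = f (x + s *\<^sub>R (y - x))" for s :: real
  have \<phi>_convex: "convex_on UNIV \<phi>"
  proof
    fix t a b :: real
    assume "0 < t" "t < 1"
    have line: "x + ((1 - t) *\<^sub>R a + t *\<^sub>R b) *\<^sub>R (y - x)
        = (1 - t) *\<^sub>R (x + a *\<^sub>R (y - x)) + t *\<^sub>R (x + b *\<^sub>R (y - x))"
      by (simp add: algebra_simps)
    show "\<phi> ((1 - t) *\<^sub>R a + t *\<^sub>R b) \<le> (1 - t) * \<phi> a + t * \<phi> b"
      unfolding \<phi>_def line using convex_onD[OF convex, of t] \<open>0 < t\<close> \<open>t < 1\<close> by simp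
  qed simp
  have \<phi>_deriv: "(\<phi> has_real_derivative (D \<bullet> (y - x))) (at 0)"
    unfolding \<phi>_def by (rule has_real_derivative_along_line) (simp add: grad)
  have "\<phi> 1 - \<phi> 0 \<ge> (D \<bullet> (y - x)) * (1 - 0)"
    by (rule convex_on_imp_above_tangent[OF \<phi>_convex _ _ _ \<phi>_deriv]) simp_all
  then show ?thesis unfolding \<phi>_def by simp
qed

lemma gradient_variational_inequality_at_minimum:
  fixes f :: "'a::real_inner \<Rightarrow> real"
  assumes grad: "GDERIV f x :> D"
    and X: "convex X" "x \<in> X" "z \<in> X"
    and minimum: "\<And>y. y \<in> X \<Longrightarrow> f x \<le> f y"
  shows "D \<bullet> (z - x) \<ge> 0"
proof (rule ccontr)
  assume "\<not> D \<bullet> (z - x) \<ge> 0"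
  then have negative: "D \<bullet> (z - x) < 0" by simp
  have "((\<lambda>s. f (x + s *\<^sub>R (z - x))) has_real_derivative (D \<bullet> (z - x))) (at 0)"
    by (rule has_real_derivative_along_line) (simp add: grad)
  from DERIV_neg_dec_right[OF this negative] obtain d where "d > 0"
    and decrease: "\<And>s. 0 < s \<Longrightarrow> s < d \<Longrightarrow> f (x + s *\<^sub>R (z - x)) < f x"
    by auto
  define s where "s = min (d / 2) 1"
  have "0 < s" "s < d" "s \<le> 1" using \<open>d > 0\<close> by (auto simp: s_def)
  have "x + s *\<^sub>R (z - x) = (1 - s) *\<^sub>R x + s *\<^sub>R z" by (simp add: algebra_simps)
  with \<open>0 < s\<close> \<open>s \<le> 1\<close> X have "x + s *\<^sub>R (z - x) \<in> X" by (simp add: convexD)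
  with minimum decrease[OF \<open>0 < s\<close> \<open>s < d\<close>] show False by fastforce
qed

lemma lipschitz_gradient_lower_bound:
  fixes f :: "'a::real_inner \<Rightarrow> real"
  assumes grad: "\<And>y. GDERIV f y :> g y"
    and lipschitz: "\<And>y z. norm (g y - g z) \<le> L * norm (y - z)"
    and L: "L > 0"
    and convex: "convex_on UNIV f"
  shows "f z + g z \<bullet> (x - z) + (norm (g x - g z))\<^sup>2 / (2 * L) \<le> f x"
proof -
  \<comment> \<open>The tilted convex function \<phi> is minimised at z; apply the quadratic upper bound
      to it at the gradient step taken from x.\<close>
  define \<phi> where "\<phi> y = f y - g z \<bullet> y" for y
  define h where "h = g x - g z"
  define y where "y = x - (1 / L) *\<^sub>R h"
  have \<phi>_grad: "GDERIV \<phi> y :> (g y - g z)" for y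
  proof -
    have "GDERIV (\<lambda>y. g z \<bullet> y) y :> g z"
      unfolding gderiv_def by (rule derivative_eq_intros | simp add: inner_commute)+
    then show ?thesis unfolding \<phi>_def by (rule GDERIV_diff[OF grad])
  qed
  have "\<phi> y \<le> \<phi> x + (g x - g z) \<bullet> (y - x) + L / 2 * (norm (y - x))\<^sup>2"
    by (rule lipschitz_gradient_upper_bound[OF \<phi>_grad]) (use lipschitz in simp)
  also have "\<dots> = \<phi> x - (norm h)\<^sup>2 / (2 * L)"
  proof -
    have "y - x = - ((1 / L) *\<^sub>R h)" by (simp add: y_def)
    then have "(g x - g z) \<bullet> (y - x) = - ((norm h)\<^sup>2 / L)"
      and "(norm (y - x))\<^sup>2 = (norm h)\<^sup>2 / L\<^sup>2"
      using L by (simp_all add: h_def power2_norm_eq_inner power_divide)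
    then show ?thesis using L by (simp add: power2_eq_square field_simps)
  qed
  finally have "\<phi> y \<le> \<phi> x - (norm h)\<^sup>2 / (2 * L)" .
  moreover have "\<phi> z \<le> \<phi> y"
    using convex_on_gradient_inequality[OF grad convex, of z y]
    unfolding \<phi>_def by (simp add: inner_diff_right)
  ultimately show ?thesis unfolding \<phi>_def h_def by (simp add: inner_diff_right)
qed

lemma lipschitz_gradient_cocoercive:
  fixes f :: "'a::real_inner \<Rightarrow> real"
  assumes grad: "\<And>y. GDERIV f y :> g y"
    and lipschitz: "\<And>y z. norm (g y - g z) \<le> L * norm (y - z)"
    and L: "L > 0"
    and convex: "convex_on UNIV f"
  shows "(norm (g x - g z))\<^sup>2 \<le> L * ((g x - g z) \<bullet> (x - z))"
proof -
  have "f z + g z \<bullet> (x - z) + (norm (g x - g z))\<^sup>2 / (2 * L) \<le> f x"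
    and "f x + g x \<bullet> (z - x) + (norm (g z - g x))\<^sup>2 / (2 * L) \<le> f z"
    by (rule lipschitz_gradient_lower_bound[OF grad lipschitz L convex])+
  then have "(norm (g x - g z))\<^sup>2 / L \<le> (g x - g z) \<bullet> (x - z)"
    by (simp add: norm_minus_commute inner_diff_left inner_diff_right field_simps)
  then show ?thesis using L by (simp add: field_simps)
qed

lemma segment_enters_cball:
  fixes y c v :: "'a::real_inner"
  assumes inside: "norm (y - c) \<le> t"
    and inward: "norm (y - c) < t \<or> (y - c) \<bullet> v < 0"
  obtains s where "0 < s" "s \<le> 1" "y + s *\<^sub>R v \<in> cball c t"
proof -
  define d where "d = y - c"
  have "\<exists>s>0. s \<le> 1 \<and> norm (d + s *\<^sub>R v) \<le> t"
  proof (cases "norm d < t")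
    case True
    define s where "s = min 1 ((t - norm d) / (norm v + 1))"
    have "0 < (t - norm d) / (norm v + 1)"
      using True by (intro divide_pos_pos) (simp_all add: add_nonneg_pos)
    then have "0 < s" "s \<le> 1" by (simp_all add: s_def)
    have "s * norm v \<le> (t - norm d) / (norm v + 1) * norm v"
      by (rule mult_right_mono) (auto simp: s_def)
    also have "\<dots> = (t - norm d) * (norm v / (norm v + 1))" by simp
    also have "\<dots> \<le> t - norm d"
      using True by (intro mult_right_le_one_le) (auto simp: divide_le_eq_1 add_nonneg_pos)
    finally have "norm d + norm (s *\<^sub>R v) \<le> t" using \<open>0 < s\<close> by simp
    then have "norm (d + s *\<^sub>R v) \<le> t" by (meson norm_triangle_le order_refl)
    with \<open>0 < s\<close> \<open>s \<le> 1\<close> show ?thesis by blast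
  next
    case False
    with inward have dv: "d \<bullet> v < 0" by (simp add: d_def)
    then have "v \<noteq> 0" by auto
    define s where "s = min 1 (- (d \<bullet> v) / (norm v)\<^sup>2)"
    have "0 < s" "s \<le> 1" using dv \<open>v \<noteq> 0\<close> by (auto simp: s_def divide_neg_pos)
    have "s * (norm v)\<^sup>2 \<le> - (d \<bullet> v) / (norm v)\<^sup>2 * (norm v)\<^sup>2"
      by (rule mult_right_mono) (auto simp: s_def)
    also have "\<dots> = - (d \<bullet> v)" using \<open>v \<noteq> 0\<close> by simp
    finally have "s * (2 * (d \<bullet> v) + s * (norm v)\<^sup>2) \<le> 0"
      using \<open>0 < s\<close> dv by (intro mult_nonneg_nonpos) linarith+
    moreover have "(norm (d + s *\<^sub>R v))\<^sup>2 = (norm d)\<^sup>2 + s * (2 * (d \<bullet> v) + s * (norm v)\<^sup>2)"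
      unfolding power2_norm_add by (simp add: power_mult_distrib algebra_simps power2_eq_square)
    ultimately have "(norm (d + s *\<^sub>R v))\<^sup>2 \<le> (norm d)\<^sup>2" by simp
    also have "\<dots> \<le> t\<^sup>2"
      using inside by (simp add: d_def power_mono)
    finally have "(norm (d + s *\<^sub>R v))\<^sup>2 \<le> t\<^sup>2" .
    then have "norm (d + s *\<^sub>R v) \<le> t"
      by (rule power2_le_imp_le) (rule order_trans[OF norm_ge_zero inside])
    with \<open>0 < s\<close> \<open>s \<le> 1\<close> show ?thesis by blast
  qed
  then show thesis
    using that by (auto simp: d_def dist_norm norm_minus_commute algebra_simps)
qed

lemma local_lmo_step_distance_decrease:
  fixes X :: "'a::real_inner set"
  assumes X: "convex X" and xs: "xs \<in> X"
    and y: "y \<in> X \<inter> cball x t"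
    and y_min: "\<And>z. z \<in> X \<inter> cball x t \<Longrightarrow> c \<bullet> y \<le> c \<bullet> z"
    and xs_opt: "\<And>z. z \<in> X \<Longrightarrow> 0 \<le> c' \<bullet> (z - xs)"
    and L: "0 < L" and t: "t = norm (c - c') / L"
    and cocoercive: "(norm (c - c'))\<^sup>2 \<le> L * ((c - c') \<bullet> (x - xs))"
  shows "(norm (y - xs))\<^sup>2 \<le> (norm (x - xs))\<^sup>2 - t\<^sup>2"
proof -
  define d e u where "d = y - x" and "e = x - xs" and "u = (1 / L) *\<^sub>R (c - c')"
  have y_xs: "y - xs = d + e" by (simp add: d_def e_def)
  have norm_d: "norm d \<le> t" using y by (simp add: d_def dist_norm norm_minus_commute)
  have norm_u: "norm u = t" using L by (simp add: u_def t)
  have u_e: "t\<^sup>2 \<le> u \<bullet> e"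
  proof -
    have "t\<^sup>2 = (norm (c - c'))\<^sup>2 / L\<^sup>2" by (simp add: t power_divide)
    also have "\<dots> \<le> L * ((c - c') \<bullet> e) / L\<^sup>2"
      using cocoercive by (simp add: e_def divide_right_mono)
    also have "\<dots> = u \<bullet> e"
      using L unfolding u_def inner_scaleR_left by (simp add: power2_eq_square)
    finally show ?thesis .
  qed
  consider (boundary) "norm d = t" "0 \<le> d \<bullet> (xs - y)"
    | (inward) s where "0 < s" "s \<le> 1" "y + s *\<^sub>R (xs - y) \<in> cball x t"
  proof (cases "norm d = t \<and> 0 \<le> d \<bullet> (xs - y)")
    case False
    with norm_d have "norm (y - x) < t \<or> (y - x) \<bullet> (xs - y) < 0" by (auto simp: d_def)
    with norm_d show thesis
      using segment_enters_cball that(2) by (metis d_def)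
  qed blast
  then show ?thesis
  proof cases
    case boundary
    have "d \<bullet> (xs - y) = - (d \<bullet> e) - (norm d)\<^sup>2"
      by (simp add: y_xs[symmetric] inner_diff_right power2_norm_eq_inner d_def e_def algebra_simps)
    with boundary have "d \<bullet> e \<le> - t\<^sup>2" by simp
    with boundary show ?thesis by (simp add: y_xs power2_norm_add flip: e_def)
  next
    case inward
    \<comment> \<open>Moving from y towards xs stays feasible, so both optimality conditions apply to the
        segment between y and xs; together they force y to be the gradient step x - u.\<close>
    have "y + s *\<^sub>R (xs - y) = (1 - s) *\<^sub>R y + s *\<^sub>R xs" by (simp add: algebra_simps)
    with inward X y xs have "y + s *\<^sub>R (xs - y) \<in> X" by (simp add: convexD)
    with inward y_min have "c \<bullet> y \<le> c \<bullet> (y + s *\<^sub>R (xs - y))" by blast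
    with \<open>0 < s\<close> have "0 \<le> c \<bullet> (xs - y)" by (simp add: inner_add_right zero_le_mult_iff)
    moreover have "0 \<le> c' \<bullet> (y - xs)" using xs_opt y by blast
    ultimately have "(c - c') \<bullet> (d + e) \<le> 0"
      by (simp add: y_xs[symmetric] inner_diff_left inner_diff_right)
    then have "u \<bullet> (d + e) \<le> 0"
      unfolding u_def inner_scaleR_left by (rule mult_nonneg_nonpos[rotated]) (use L in simp)
    moreover have "(norm d)\<^sup>2 \<le> t\<^sup>2" using norm_d by (simp add: power_mono)
    ultimately have "(norm (d + u))\<^sup>2 \<le> 0"
      using norm_u u_e by (simp add: power2_norm_add inner_add_right inner_commute)
    then have gradient_step: "y - xs = e + (- u)" by (simp add: y_xs add_eq_0_iff2)
    show ?thesis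
      unfolding gradient_step power2_norm_add using norm_u u_e by (simp add: inner_commute flip: e_def)
  qed
qed

lemma sum_le_telescope:
  fixes a b :: "nat \<Rightarrow> 'a::ordered_ab_group_add"
  assumes "\<And>k. a (Suc k) \<le> a k - b k"
  shows "(\<Sum>k<n. b k) \<le> a 0 - a n"
proof -
  have "(\<Sum>k<n. b k) \<le> (\<Sum>k<n. a k - a (Suc k))"
    by (rule sum_mono) (use assms in \<open>simp add: le_diff_eq add.commute\<close>)
  then show ?thesis by (simp only: sum_lessThan_telescope')
qed

lemma Min_le_average:
  fixes h :: "'b \<Rightarrow> real"
  assumes "finite A" "A \<noteq> {}"
  shows "Min (h ` A) \<le> sum h A / real (card A)"
proof -
  have "real (card A) * Min (h ` A) \<le> sum h A"
    by (rule sum_bounded_below) (simp add: assms)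
  then show ?thesis using assms by (simp add: field_simps card_gt_0_iff)
qed

theorem theorem2:
  fixes X :: "'a::euclidean_space set"
    and f :: "'a \<Rightarrow> real"
    and g :: "'a \<Rightarrow> 'a"
    and L :: real
    and x :: "nat \<Rightarrow> 'a"
    and xs :: 'a
    and K :: nat
  assumes X_nonempty: "X \<noteq> {}"
    and X_closed: "closed X"
    and X_convex: "convex X"
    and grad: "\<And>y. GDERIV f y :> g y"
    and L_pos: "L > 0"
    and L_smooth: "\<And>y z. norm (g y - g z) \<le> L * norm (y - z)"
    and strict_cvx: "strictly_convex_on UNIV f"
    and xs_in: "xs \<in> X"
    and xs_min: "\<And>y. y \<in> X \<Longrightarrow> f xs \<le> f y"
    and x0: "x 0 \<in> X"
    and step_feas: "\<And>k. x (Suc k) \<in> X \<inter> cball (x k) (norm (g (x k) - g xs) / L)"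
    and step_min: "\<And>k z. z \<in> X \<inter> cball (x k) (norm (g (x k) - g xs) / L) \<Longrightarrow>
                     g (x k) \<bullet> x (Suc k) \<le> g (x k) \<bullet> z"
    and K: "K \<ge> 1"
  shows "Min ((\<lambda>k. (norm (g (x k) - g xs))\<^sup>2) ` {..<K})
           \<le> (1 / real K) * (\<Sum>k<K. (norm (g (x k) - g xs))\<^sup>2)
       \<and> (1 / real K) * (\<Sum>k<K. (norm (g (x k) - g xs))\<^sup>2)
           \<le> L\<^sup>2 * (norm (x 0 - xs))\<^sup>2 / real K"
proof -
  have convex: "convex_on UNIV f"
    by (rule strictly_convex_on_imp_convex_on[OF strict_cvx])
  have xs_opt: "0 \<le> g xs \<bullet> (z - xs)" if "z \<in> X" for z
    by (rule gradient_variational_inequality_at_minimum[OF grad X_convex xs_in that xs_min])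
  have decrease: "(norm (x (Suc k) - xs))\<^sup>2
      \<le> (norm (x k - xs))\<^sup>2 - (norm (g (x k) - g xs) / L)\<^sup>2" for k
    by (rule local_lmo_step_distance_decrease[OF X_convex xs_in step_feas step_min xs_opt
          L_pos refl lipschitz_gradient_cocoercive[OF grad L_smooth L_pos convex]])
  have "(\<Sum>k<K. (norm (g (x k) - g xs))\<^sup>2) / L\<^sup>2 = (\<Sum>k<K. (norm (g (x k) - g xs) / L)\<^sup>2)"
    by (simp add: power_divide sum_divide_distrib)
  also have "\<dots> \<le> (norm (x 0 - xs))\<^sup>2 - (norm (x K - xs))\<^sup>2"
    by (rule sum_le_telescope) (rule decrease)
  also have "\<dots> \<le> (norm (x 0 - xs))\<^sup>2" by simp
  finally have "(\<Sum>k<K. (norm (g (x k) - g xs))\<^sup>2) \<le> L\<^sup>2 * (norm (x 0 - xs))\<^sup>2"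
    using L_pos by (simp add: pos_divide_le_eq mult.commute)
  moreover have "Min ((\<lambda>k. (norm (g (x k) - g xs))\<^sup>2) ` {..<K})
      \<le> (\<Sum>k<K. (norm (g (x k) - g xs))\<^sup>2) / real K"
    using Min_le_average[of "{..<K}"] K by (simp add: lessThan_empty_iff)
  ultimately show ?thesis
    using K by (simp add: divide_right_mono)
qed

end
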